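(* Let $f:\mathbb{Z}^3\to\mathbb{C}$ and define $g(k_1,k_2,k_3,k_4)=\sum_{(l_1,l_2,l_3)}^{(k_1,k_2,k_3,k_4)}f(l_1,l_2,l_3)$. Then \begin{multline*} T'_{2,3}\, g(k_1,k_2,k_3,k_4) = - \frac{1}{2} \left( \sum_{l_1=k_2+1}^{k_3} \sum_{l_2=k_2+1}^{k_3} \sum_{l_3=k_2}^{k_4} T'_{1,2} f(l_1,l_2,l_3) + \sum_{l_1=k_1}^{k_2+1} \sum_{l_2=k_2}^{k_3-1} \sum_{l_3=k_2}^{k_3-1} T'_{2,3} f(l_1,l_2,l_3) \right) \\ + \frac{1}{2} \left( \sum_{l_1=k_2}^{k_3-1} \sum_{l_2=k_2}^{k_3-1} \Delta_2 (\operatorname{id} + E_1) T'_{1,2} f(l_1,l_2,k_2) - \sum_{l_2=k_2}^{k_3-1} \sum_{l_3=k_2}^{k_3-1} \Delta_2 (\operatorname{id} + E_3) T'_{2,3} f(k_2+1,l_2,l_3) \right) \\ + \frac{1}{2} \Big( T'_{1,2} f(k_2,k_2,k_2+1) - T'_{1,2} f(k_2,k_2,k_3+1) + T'_{2,3} f(k_2,k_2,k_2) - T'_{2,3} f(k_3,k_2,k_2) \Big) \\ - T'_{1,2} f(k_2,k_3,k_2+1) - T'_{2,3} f(k_2,k_2,k_3). \end{multline*} Moreover, for every function $h:\mathbb{Z}^2\to\mathbb{C}$, $$T'_{1,2}\left(\sum_{(l_1,l_2)}^{(k_1,k_2,k_3)}h(l_1,l_2)\right)(k_1,k_2,k_3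)=-\frac12\sum_{l_1=k_1}^{k_2-1}\sum_{l_2=k_1}^{k_2-1}T'_{1,2}\,h(l_1,l_2).$$
   Context: Extended interval sums: $\sum_{i=a}^b F(i)=F(a)+\cdots+F(b)$ if $a\le b$, $=0$ if $b=a-1$, and $=-F(b+1)-\cdots-F(a-1)$ if $b+1\le a-1$. For functions $A$ on $\mathbb{Z}^{m-1}$ and $(k_1,\ldots,k_m)\in\mathbb{Z}^m$ define recursively $\sum_{(l_1)}^{(k_1,k_2)}A(l_1)=\sum_{l_1=k_1}^{k_2}A(l_1)$ and, for $m>2$, $$\sum_{(l_1,\ldots,l_{m-1})}^{(k_1,\ldots,k_m)}A=\sum_{(l_1,\ldots,l_{m-2})}^{(k_1,\ldots,k_{m-1})}\sum_{l_{m-1}=k_{m-1}+1}^{k_m}A(l_1,\ldots,l_{m-1})+\sum_{(l_1,\ldots,l_{m-2})}^{(k_1,\ldots,k_{m-1}-1)}A(l_1,\ldots,l_{m-2},k_{m-1}).$$ For a function of several integer variables, $E_j$ is the shift in the $j$-th variable ($E_jF(\ldots,x_j,\ldots)=F(\ldots,x_j+1,\ldots)$), $\Delta_j=E_j-\operatorname{id}$, and $S_{j,j+1}$ swaps the $j$-th and $(j+1)$-st variables; products of operators are compositions. Define $T'_{j,j+1}=(\operatorname{id}+S_{j,j+1})(\operatorname{id}+E_{j+1}\Delta_j)$. Notation such as $T'_{1,2}f(k_2,k_2,k_2+1)$ or $\Delta_2(\operatorname{id}+E_1)T'_{1,2}f(l_1,l_2,k_2)$ means: apply the operator to $f$ as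 a function of all its variables, then evaluate at the indicated arguments. *)

theory Defs
  imports Complex_Main
begin

definition esum :: "(int \<Rightarrow> complex) \<Rightarrow> int \<Rightarrow> int \<Rightarrow> complex" where
  "esum F a b = (if a \<le> b then (\<Sum>i\<in>{a..b}. F i) else - (\<Sum>i\<in>{b+1..a-1}. F i))"

definition msum2 :: "(int \<Rightarrow> complex) \<Rightarrow> int \<Rightarrow> int \<Rightarrow> complex" where
  "msum2 A k1 k2 = esum A k1 k2"

definition msum3 :: "(int \<Rightarrow> int \<Rightarrow> complex) \<Rightarrow> int \<Rightarrow> int \<Rightarrow> int \<Rightarrow> complex" where
  "msum3 A k1 k2 k3 =
     msum2 (\<lambda>l1. esum (\<lambda>l2. A l1 l2) (k2+1) k3) k1 k2 + msum2 (\<lambda>l1. A l1 k2) k1 (k2-1)"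

definition msum4 :: "(int \<Rightarrow> int \<Rightarrow> int \<Rightarrow> complex) \<Rightarrow> int \<Rightarrow> int \<Rightarrow> int \<Rightarrow> int \<Rightarrow> complex" where
  "msum4 A k1 k2 k3 k4 =
     msum3 (\<lambda>l1 l2. esum (\<lambda>l3. A l1 l2 l3) (k3+1) k4) k1 k2 k3
   + msum3 (\<lambda>l1 l2. A l1 l2 k3) k1 k2 (k3-1)"

definition E1_2 :: "(int \<Rightarrow> int \<Rightarrow> complex) \<Rightarrow> int \<Rightarrow> int \<Rightarrow> complex" where
  "E1_2 F = (\<lambda>x y. F (x+1) y)"
definition E2_2 :: "(int \<Rightarrow> int \<Rightarrow> complex) \<Rightarrow> int \<Rightarrow> int \<Rightarrow> complex" where
  "E2_2 F = (\<lambda>x y. F x (y+1))"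
definition D1_2 :: "(int \<Rightarrow> int \<Rightarrow> complex) \<Rightarrow> int \<Rightarrow> int \<Rightarrow> complex" where
  "D1_2 F = (\<lambda>x y. E1_2 F x y - F x y)"
definition S12_2 :: "(int \<Rightarrow> int \<Rightarrow> complex) \<Rightarrow> int \<Rightarrow> int \<Rightarrow> complex" where
  "S12_2 F = (\<lambda>x y. F y x)"

definition E1_3 :: "(int \<Rightarrow> int \<Rightarrow> int \<Rightarrow> complex) \<Rightarrow> int \<Rightarrow> int \<Rightarrow> int \<Rightarrow> complex" where
  "E1_3 F = (\<lambda>x y z. F (x+1) y z)"
definition E2_3 :: "(int \<Rightarrow> int \<Rightarrow> int \<Rightarrow> complex) \<Rightarrow> int \<Rightarrow> int \<Rightarrow> int \<Rightarrow> complex" where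
  "E2_3 F = (\<lambda>x y z. F x (y+1) z)"
definition E3_3 :: "(int \<Rightarrow> int \<Rightarrow> int \<Rightarrow> complex) \<Rightarrow> int \<Rightarrow> int \<Rightarrow> int \<Rightarrow> complex" where
  "E3_3 F = (\<lambda>x y z. F x y (z+1))"
definition D1_3 :: "(int \<Rightarrow> int \<Rightarrow> int \<Rightarrow> complex) \<Rightarrow> int \<Rightarrow> int \<Rightarrow> int \<Rightarrow> complex" where
  "D1_3 F = (\<lambda>x y z. E1_3 F x y z - F x y z)"
definition D2_3 :: "(int \<Rightarrow> int \<Rightarrow> int \<Rightarrow> complex) \<Rightarrow> int \<Rightarrow> int \<Rightarrow> int \<Rightarrow> complex" where
  "D2_3 F = (\<lambda>x y z. E2_3 F x y z - F x y z)"
definition S12_3 :: "(int \<Rightarrow> int \<Rightarrow> int \<Rightarrow> complex) \<Rightarrow> int \<Rightarrow> int \<Rightarrow> int \<Rightarrow> complex" where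
  "S12_3 F = (\<lambda>x y z. F y x z)"
definition S23_3 :: "(int \<Rightarrow> int \<Rightarrow> int \<Rightarrow> complex) \<Rightarrow> int \<Rightarrow> int \<Rightarrow> int \<Rightarrow> complex" where
  "S23_3 F = (\<lambda>x y z. F x z y)"

definition E2_4 :: "(int \<Rightarrow> int \<Rightarrow> int \<Rightarrow> int \<Rightarrow> complex) \<Rightarrow> int \<Rightarrow> int \<Rightarrow> int \<Rightarrow> int \<Rightarrow> complex" where
  "E2_4 F = (\<lambda>x y z w. F x (y+1) z w)"
definition E3_4 :: "(int \<Rightarrow> int \<Rightarrow> int \<Rightarrow> int \<Rightarrow> complex) \<Rightarrow> int \<Rightarrow> int \<Rightarrow> int \<Rightarrow> int \<Rightarrow> complex" where
  "E3_4 F = (\<lambda>x y z w. F x y (z+1) w)"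
definition D2_4 :: "(int \<Rightarrow> int \<Rightarrow> int \<Rightarrow> int \<Rightarrow> complex) \<Rightarrow> int \<Rightarrow> int \<Rightarrow> int \<Rightarrow> int \<Rightarrow> complex" where
  "D2_4 F = (\<lambda>x y z w. E2_4 F x y z w - F x y z w)"
definition S23_4 :: "(int \<Rightarrow> int \<Rightarrow> int \<Rightarrow> int \<Rightarrow> complex) \<Rightarrow> int \<Rightarrow> int \<Rightarrow> int \<Rightarrow> int \<Rightarrow> complex" where
  "S23_4 F = (\<lambda>x y z w. F x z y w)"

text \<open>T'_{j,j+1} = (id + S_{j,j+1}) (id + E_{j+1} Delta_j), composition applied right to left.\<close>
definition Tp12_2 :: "(int \<Rightarrow> int \<Rightarrow> complex) \<Rightarrow> int \<Rightarrow> int \<Rightarrow> complex" where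
  "Tp12_2 F = (let G = (\<lambda>x y. F x y + E2_2 (D1_2 F) x y) in (\<lambda>x y. G x y + S12_2 G x y))"

definition Tp12_3 :: "(int \<Rightarrow> int \<Rightarrow> int \<Rightarrow> complex) \<Rightarrow> int \<Rightarrow> int \<Rightarrow> int \<Rightarrow> complex" where
  "Tp12_3 F = (let G = (\<lambda>x y z. F x y z + E2_3 (D1_3 F) x y z) in (\<lambda>x y z. G x y z + S12_3 G x y z))"

definition Tp23_3 :: "(int \<Rightarrow> int \<Rightarrow> int \<Rightarrow> complex) \<Rightarrow> int \<Rightarrow> int \<Rightarrow> int \<Rightarrow> complex" where
  "Tp23_3 F = (let G = (\<lambda>x y z. F x y z + E3_3 (D2_3 F) x y z) in (\<lambda>x y z. G x y z + S23_3 G x y z))"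

definition Tp23_4 :: "(int \<Rightarrow> int \<Rightarrow> int \<Rightarrow> int \<Rightarrow> complex) \<Rightarrow> int \<Rightarrow> int \<Rightarrow> int \<Rightarrow> int \<Rightarrow> complex" where
  "Tp23_4 F = (let G = (\<lambda>x y z w. F x y z w + E3_4 (D2_4 F) x y z w) in (\<lambda>x y z w. G x y z w + S23_4 G x y z w))"

end

theory Submission
  imports Defs
begin

text \<open>Telescoping, esum F a b = esum F 0 b - esum F 0 (a - 1), writes an iterated extended sum
over a box as the alternating sum of the prefix sum at the corners of the box; shifting or
permuting the variables of the summand moves or permutes the box. The operators T' are
signed combinations of shifts and swaps, and the multiple sums msum3, msum4 are sums of box
sums. Hence both sides of each identity become integer combinations of values of a single
prefix sum, and the identities reduce to comparing coefficients.\<close>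

lemma esum_empty: "esum F a (a - 1) = 0"
  by (simp add: esum_def)

lemma esum_singleton: "esum F a a = F a"
  by (simp add: esum_def)

lemma esum_last: "esum F a b = esum F a (b - 1) + F b"
proof (cases "a \<le> b")
  case True
  then have "{a..b} = insert b {a..b - 1}" by auto
  with True show ?thesis by (simp add: esum_def add.commute)
next
  case False
  then have "{b..a - 1} = insert b {b + 1..a - 1}" by auto
  with False show ?thesis by (simp add: esum_def)
qed

lemma esum_eq_diff_prefix: "esum F a b = esum F c b - esum F c (a - 1)"
proof (induction b rule: int_induct[where k = "a - 1"])
  case base
  show ?case by (simp add: esum_empty)
next
  case (step1 i)
  then show ?case using esum_last[of F _ "i + 1"] by simp
next
  case (step2 i)
  then show ?case using esum_last[of F _ i] by simp
qed

lemma esum_add: "esum (\<lambda>x. F x + G x) a b = esum F a b + esum G a b"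
  by (simp add: esum_def sum.distrib)

lemma esum_subtract: "esum (\<lambda>x. F x - G x) a b = esum F a b - esum G a b"
  by (simp add: esum_def sum_subtractf)

lemma esum_shift: "esum (\<lambda>x. F (x + c)) a b = esum F (a + c) (b + c)"
proof (induction b rule: int_induct[where k = "a - 1"])
  case base
  show ?case using esum_empty[of _ a] esum_empty[of _ "a + c"] by (simp add: algebra_simps)
next
  case (step1 i)
  then show ?case
    using esum_last[of "\<lambda>x. F (x + c)" a "i + 1"] esum_last[of F "a + c" "i + 1 + c"]
    by (simp add: algebra_simps)
next
  case (step2 i)
  then show ?case
    using esum_last[of "\<lambda>x. F (x + c)" a i] esum_last[of F "a + c" "i + c"]
    by (simp add: algebra_simps)
qed

lemma esum_swap: "esum (\<lambda>x. esum (G x) c d) a b = esum (\<lambda>y. esum (\<lambda>x. G x y) a b) c d"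
proof (induction b rule: int_induct[where k = "a - 1"])
  case base
  show ?case by (simp add: esum_empty esum_def)
next
  case (step1 i)
  then show ?case using esum_last[of _ a "i + 1"] by (simp add: esum_add)
next
  case (step2 i)
  then show ?case using esum_last[of _ a i] by (simp add: esum_add)
qed

definition box_sum2 :: "(int \<Rightarrow> int \<Rightarrow> complex) \<Rightarrow> int \<Rightarrow> int \<Rightarrow> int \<Rightarrow> int \<Rightarrow> complex" where
  "box_sum2 F a1 b1 a2 b2 = esum (\<lambda>x. esum (F x) a2 b2) a1 b1"

definition box_sum3 ::
    "(int \<Rightarrow> int \<Rightarrow> int \<Rightarrow> complex) \<Rightarrow> int \<Rightarrow> int \<Rightarrow> int \<Rightarrow> int \<Rightarrow> int \<Rightarrow> int \<Rightarrow> complex" where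
  "box_sum3 F a1 b1 a2 b2 a3 b3 = esum (\<lambda>x. box_sum2 (F x) a2 b2 a3 b3) a1 b1"

definition prefix_sum2 :: "(int \<Rightarrow> int \<Rightarrow> complex) \<Rightarrow> int \<Rightarrow> int \<Rightarrow> complex" where
  "prefix_sum2 F x y = box_sum2 F 0 x 0 y"

definition prefix_sum3 :: "(int \<Rightarrow> int \<Rightarrow> int \<Rightarrow> complex) \<Rightarrow> int \<Rightarrow> int \<Rightarrow> int \<Rightarrow> complex" where
  "prefix_sum3 F x y z = box_sum3 F 0 x 0 y 0 z"

definition shift2 :: "int \<Rightarrow> int \<Rightarrow> (int \<Rightarrow> int \<Rightarrow> complex) \<Rightarrow> int \<Rightarrow> int \<Rightarrow> complex" where
  "shift2 a b F = (\<lambda>x y. F (x + a) (y + b))"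

definition shift3 ::
    "int \<Rightarrow> int \<Rightarrow> int \<Rightarrow> (int \<Rightarrow> int \<Rightarrow> int \<Rightarrow> complex) \<Rightarrow> int \<Rightarrow> int \<Rightarrow> int \<Rightarrow> complex" where
  "shift3 a b c F = (\<lambda>x y z. F (x + a) (y + b) (z + c))"

lemma box_sum3_eq_esum:
  "box_sum3 F a1 b1 a2 b2 a3 b3 = esum (\<lambda>x. esum (\<lambda>y. esum (\<lambda>z. F x y z) a3 b3) a2 b2) a1 b1"
  by (simp add: box_sum3_def box_sum2_def)

lemma box_sum2_add:
  "box_sum2 (\<lambda>x y. F x y + G x y) a1 b1 a2 b2 = box_sum2 F a1 b1 a2 b2 + box_sum2 G a1 b1 a2 b2"
  by (simp add: box_sum2_def esum_add)

lemma box_sum2_subtract: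
  "box_sum2 (\<lambda>x y. F x y - G x y) a1 b1 a2 b2 = box_sum2 F a1 b1 a2 b2 - box_sum2 G a1 b1 a2 b2"
  by (simp add: box_sum2_def esum_subtract)

lemma box_sum2_shift2: "box_sum2 (shift2 a b F) a1 b1 a2 b2 = box_sum2 F (a1 + a) (b1 + a) (a2 + b) (b2 + b)"
  using esum_shift[where F = "\<lambda>x. esum (F x) (a2 + b) (b2 + b)" and c = a]
  by (simp add: box_sum2_def shift2_def esum_shift[of "F _"])

lemma box_sum2_S12_2: "box_sum2 (S12_2 F) a1 b1 a2 b2 = box_sum2 F a2 b2 a1 b1"
  unfolding box_sum2_def S12_2_def by (rule esum_swap)

lemma box_sum2_eq_corners:
  "box_sum2 F a1 b1 a2 b2 =
     prefix_sum2 F b1 b2 - prefix_sum2 F b1 (a2 - 1) - prefix_sum2 F (a1 - 1) b2 + prefix_sum2 F (a1 - 1) (a2 - 1)"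
proof -
  have "box_sum2 F a1 b1 a2 b2 = box_sum2 F 0 b1 a2 b2 - box_sum2 F 0 (a1 - 1) a2 b2"
    unfolding box_sum2_def by (rule esum_eq_diff_prefix)
  moreover have "box_sum2 F 0 t a2 b2 = prefix_sum2 F t b2 - prefix_sum2 F t (a2 - 1)" for t
    unfolding prefix_sum2_def box_sum2_def by (subst esum_eq_diff_prefix[of _ a2]) (simp add: esum_subtract)
  ultimately show ?thesis by simp
qed

lemma box_sum3_add:
  "box_sum3 (\<lambda>x y z. F x y z + G x y z) a1 b1 a2 b2 a3 b3
     = box_sum3 F a1 b1 a2 b2 a3 b3 + box_sum3 G a1 b1 a2 b2 a3 b3"
  by (simp add: box_sum3_def box_sum2_add esum_add)

lemma box_sum3_subtract:
  "box_sum3 (\<lambda>x y z. F x y z - G x y z) a1 b1 a2 b2 a3 b3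
     = box_sum3 F a1 b1 a2 b2 a3 b3 - box_sum3 G a1 b1 a2 b2 a3 b3"
  by (simp add: box_sum3_def box_sum2_subtract esum_subtract)

lemma box_sum3_shift3:
  "box_sum3 (shift3 a b c F) a1 b1 a2 b2 a3 b3
     = box_sum3 F (a1 + a) (b1 + a) (a2 + b) (b2 + b) (a3 + c) (b3 + c)"
proof -
  have "shift3 a b c F x = shift2 b c (F (x + a))" for x
    by (simp add: shift3_def shift2_def)
  then show ?thesis
    using esum_shift[where F = "\<lambda>x. box_sum2 (F x) (a2 + b) (b2 + b) (a3 + c) (b3 + c)" and c = a]
    by (simp add: box_sum3_def box_sum2_shift2)
qed

lemma box_sum3_S12_3: "box_sum3 (S12_3 F) a1 b1 a2 b2 a3 b3 = box_sum3 F a2 b2 a1 b1 a3 b3"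
  unfolding box_sum3_eq_esum S12_3_def by (rule esum_swap)

lemma box_sum3_S23_3: "box_sum3 (S23_3 F) a1 b1 a2 b2 a3 b3 = box_sum3 F a1 b1 a3 b3 a2 b2"
proof -
  have "S23_3 F x = S12_2 (F x)" for x
    by (simp add: S23_3_def S12_2_def)
  then show ?thesis by (simp add: box_sum3_def box_sum2_S12_2)
qed

lemma box_sum3_eq_corners:
  "box_sum3 F a1 b1 a2 b2 a3 b3 =
     prefix_sum3 F b1 b2 b3 - prefix_sum3 F b1 b2 (a3 - 1)
   - prefix_sum3 F b1 (a2 - 1) b3 + prefix_sum3 F b1 (a2 - 1) (a3 - 1)
   - prefix_sum3 F (a1 - 1) b2 b3 + prefix_sum3 F (a1 - 1) b2 (a3 - 1)
   + prefix_sum3 F (a1 - 1) (a2 - 1) b3 - prefix_sum3 F (a1 - 1) (a2 - 1) (a3 - 1)"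
proof -
  have slice: "esum (\<lambda>x. prefix_sum2 (F x) y z) a1 b1 = prefix_sum3 F b1 y z - prefix_sum3 F (a1 - 1) y z"
    for y z
    unfolding prefix_sum2_def prefix_sum3_def box_sum3_def by (rule esum_eq_diff_prefix)
  show ?thesis
    unfolding box_sum3_def box_sum2_eq_corners
    by (simp add: esum_add esum_subtract slice)
qed

lemma box_sum3_singleton: "box_sum3 F a a b b c c = F a b c"
  by (simp add: box_sum3_def box_sum2_def esum_singleton)

lemma Tp12_2_eq_shifts:
  "Tp12_2 F = (\<lambda>x y. F x y + shift2 1 1 F x y - shift2 0 1 F x y
                   + S12_2 F x y + S12_2 (shift2 1 1 F) x y - S12_2 (shift2 0 1 F) x y)"
  by (simp add: Tp12_2_def shift2_def E2_2_def D1_2_def E1_2_def S12_2_def Let_def fun_eq_iff)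

lemma Tp12_3_eq_shifts:
  "Tp12_3 F = (\<lambda>x y z. F x y z + shift3 1 1 0 F x y z - shift3 0 1 0 F x y z
                     + S12_3 F x y z + S12_3 (shift3 1 1 0 F) x y z - S12_3 (shift3 0 1 0 F) x y z)"
  by (simp add: Tp12_3_def shift3_def E2_3_def D1_3_def E1_3_def S12_3_def Let_def fun_eq_iff)

lemma Tp23_3_eq_shifts:
  "Tp23_3 F = (\<lambda>x y z. F x y z + shift3 0 1 1 F x y z - shift3 0 0 1 F x y z
                     + S23_3 F x y z + S23_3 (shift3 0 1 1 F) x y z - S23_3 (shift3 0 0 1 F) x y z)"
  by (simp add: Tp23_3_def shift3_def E3_3_def D2_3_def E2_3_def S23_3_def Let_def fun_eq_iff)

lemma D2_3_eq_shift: "D2_3 F = (\<lambda>x y z. shift3 0 1 0 F x y z - F x y z)"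
  by (simp add: D2_3_def E2_3_def shift3_def fun_eq_iff)

lemma E1_3_eq_shift: "E1_3 F = shift3 1 0 0 F"
  by (simp add: E1_3_def shift3_def fun_eq_iff)

lemma E3_3_eq_shift: "E3_3 F = shift3 0 0 1 F"
  by (simp add: E3_3_def shift3_def fun_eq_iff)

lemma Tp12_3_apply:
  "Tp12_3 G x y z = G x y z + G (x + 1) (y + 1) z - G x (y + 1) z
                  + G y x z + G (y + 1) (x + 1) z - G y (x + 1) z"
  by (simp add: Tp12_3_def Let_def E2_3_def D1_3_def E1_3_def S12_3_def)

lemma Tp23_4_apply:
  "Tp23_4 G w x y z = G w x y z + G w (x + 1) (y + 1) z - G w x (y + 1) z
                    + G w y x z + G w (y + 1) (x + 1) z - G w y (x + 1) z"
  by (simp add: Tp23_4_def Let_def E3_4_def D2_4_def E2_4_def S23_4_def)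

lemma msum3_eq_box_sums: "msum3 h k1 k2 k3 = box_sum2 h k1 k2 (k2 + 1) k3 + box_sum2 h k1 (k2 - 1) k2 k2"
  by (simp add: msum3_def msum2_def box_sum2_def esum_singleton)

lemma msum4_eq_box_sums:
  "msum4 f k1 k2 k3 k4 =
     box_sum3 f k1 k2 (k2 + 1) k3 (k3 + 1) k4 + box_sum3 f k1 (k2 - 1) k2 k2 (k3 + 1) k4
   + box_sum3 f k1 k2 (k2 + 1) (k3 - 1) k3 k3 + box_sum3 f k1 (k2 - 1) k2 k2 k3 k3"
  by (simp add: msum4_def msum3_def msum2_def box_sum3_eq_esum esum_singleton)

lemma Tp12_3_msum3:
  "Tp12_3 (msum3 h) k1 k2 k3 = - (1/2) * esum (\<lambda>l1. esum (\<lambda>l2. Tp12_2 h l1 l2) k1 (k2-1)) k1 (k2-1)"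
proof -
  have rhs: "esum (\<lambda>l1. esum (\<lambda>l2. Tp12_2 h l1 l2) k1 (k2-1)) k1 (k2-1)
    = box_sum2 (Tp12_2 h) k1 (k2-1) k1 (k2-1)"
    by (simp add: box_sum2_def)
  show ?thesis
    unfolding rhs Tp12_3_apply msum3_eq_box_sums
    \<comment> \<open>The corner expansion must wait until the summands are pure shifts and swaps of h.\<close>
    by (simp only: Tp12_2_eq_shifts box_sum2_add box_sum2_subtract box_sum2_shift2 box_sum2_S12_2,
        simp only: box_sum2_eq_corners, simp add: algebra_simps)
qed

lemma Tp23_4_msum4:
  "Tp23_4 (msum4 f) k1 k2 k3 k4 =
      - (1/2) * ( esum (\<lambda>l1. esum (\<lambda>l2. esum (\<lambda>l3. Tp12_3 f l1 l2 l3) k2 k4) (k2+1) k3) (k2+1) k3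
                + esum (\<lambda>l1. esum (\<lambda>l2. esum (\<lambda>l3. Tp23_3 f l1 l2 l3) k2 (k3-1)) k2 (k3-1)) k1 (k2+1) )
      + (1/2) * ( esum (\<lambda>l1. esum (\<lambda>l2.
                     D2_3 (\<lambda>x y z. Tp12_3 f x y z + E1_3 (Tp12_3 f) x y z) l1 l2 k2) k2 (k3-1)) k2 (k3-1)
                - esum (\<lambda>l2. esum (\<lambda>l3.
                     D2_3 (\<lambda>x y z. Tp23_3 f x y z + E3_3 (Tp23_3 f) x y z) (k2+1) l2 l3) k2 (k3-1)) k2 (k3-1) )
      + (1/2) * ( Tp12_3 f k2 k2 (k2+1) - Tp12_3 f k2 k2 (k3+1) + Tp23_3 f k2 k2 k2 - Tp23_3 f k3 k2 k2 )
      - Tp12_3 f k2 k3 (k2+1) - Tp23_3 f k2 k2 k3"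
proof -
  define A where "A = (\<lambda>x y z. Tp12_3 f x y z + E1_3 (Tp12_3 f) x y z)"
  define B where "B = (\<lambda>x y z. Tp23_3 f x y z + E3_3 (Tp23_3 f) x y z)"
  have box_sums:
    "esum (\<lambda>l1. esum (\<lambda>l2. esum (\<lambda>l3. Tp12_3 f l1 l2 l3) k2 k4) (k2+1) k3) (k2+1) k3
       = box_sum3 (Tp12_3 f) (k2+1) k3 (k2+1) k3 k2 k4"
    "esum (\<lambda>l1. esum (\<lambda>l2. esum (\<lambda>l3. Tp23_3 f l1 l2 l3) k2 (k3-1)) k2 (k3-1)) k1 (k2+1)
       = box_sum3 (Tp23_3 f) k1 (k2+1) k2 (k3-1) k2 (k3-1)"
    "esum (\<lambda>l1. esum (\<lambda>l2. D2_3 A l1 l2 k2) k2 (k3-1)) k2 (k3-1)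
       = box_sum3 (D2_3 A) k2 (k3-1) k2 (k3-1) k2 k2"
    "esum (\<lambda>l2. esum (\<lambda>l3. D2_3 B (k2+1) l2 l3) k2 (k3-1)) k2 (k3-1)
       = box_sum3 (D2_3 B) (k2+1) (k2+1) k2 (k3-1) k2 (k3-1)"
    by (simp_all add: box_sum3_eq_esum esum_singleton)
  have points:
    "Tp12_3 f k2 k2 (k2+1) = box_sum3 (Tp12_3 f) k2 k2 k2 k2 (k2+1) (k2+1)"
    "Tp12_3 f k2 k2 (k3+1) = box_sum3 (Tp12_3 f) k2 k2 k2 k2 (k3+1) (k3+1)"
    "Tp12_3 f k2 k3 (k2+1) = box_sum3 (Tp12_3 f) k2 k2 k3 k3 (k2+1) (k2+1)"
    "Tp23_3 f k2 k2 k2 = box_sum3 (Tp23_3 f) k2 k2 k2 k2 k2 k2"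
    "Tp23_3 f k3 k2 k2 = box_sum3 (Tp23_3 f) k3 k3 k2 k2 k2 k2"
    "Tp23_3 f k2 k2 k3 = box_sum3 (Tp23_3 f) k2 k2 k2 k2 k3 k3"
    by (simp_all only: box_sum3_singleton)
  show ?thesis
    unfolding A_def[symmetric] B_def[symmetric] box_sums points Tp23_4_apply msum4_eq_box_sums
    unfolding A_def B_def
    by (simp only: Tp12_3_eq_shifts Tp23_3_eq_shifts D2_3_eq_shift E1_3_eq_shift E3_3_eq_shift
          box_sum3_add box_sum3_subtract box_sum3_shift3 box_sum3_S12_3 box_sum3_S23_3,
        simp only: box_sum3_eq_corners, simp add: algebra_simps)
qed

theorem lemma3:
  fixes f :: "int \<Rightarrow> int \<Rightarrow> int \<Rightarrow> complex"
    and k1 k2 k3 k4 :: int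
  shows "(Tp23_4 (\<lambda>a b c d. msum4 f a b c d) k1 k2 k3 k4 =
      - (1/2) * ( esum (\<lambda>l1. esum (\<lambda>l2. esum (\<lambda>l3. Tp12_3 f l1 l2 l3) k2 k4) (k2+1) k3) (k2+1) k3
                + esum (\<lambda>l1. esum (\<lambda>l2. esum (\<lambda>l3. Tp23_3 f l1 l2 l3) k2 (k3-1)) k2 (k3-1)) k1 (k2+1) )
      + (1/2) * ( esum (\<lambda>l1. esum (\<lambda>l2.
                     D2_3 (\<lambda>x y z. Tp12_3 f x y z + E1_3 (Tp12_3 f) x y z) l1 l2 k2) k2 (k3-1)) k2 (k3-1)
                - esum (\<lambda>l2. esum (\<lambda>l3.
                     D2_3 (\<lambda>x y z. Tp23_3 f x y z + E3_3 (Tp23_3 f) x y z) (k2+1) l2 l3) k2 (k3-1)) k2 (k3-1) )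
      + (1/2) * ( Tp12_3 f k2 k2 (k2+1) - Tp12_3 f k2 k2 (k3+1) + Tp23_3 f k2 k2 k2 - Tp23_3 f k3 k2 k2 )
      - Tp12_3 f k2 k3 (k2+1) - Tp23_3 f k2 k2 k3)
   \<and> (\<forall>h :: int \<Rightarrow> int \<Rightarrow> complex. Tp12_3 (\<lambda>a b c. msum3 h a b c) k1 k2 k3 =
      - (1/2) * esum (\<lambda>l1. esum (\<lambda>l2. Tp12_2 h l1 l2) k1 (k2-1)) k1 (k2-1))"
  using Tp23_4_msum4 Tp12_3_msum3 by blast

end
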